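(* Let $X$ be a complex separable Hilbert space, $A\in\mathcal B(X)$ self-adjoint, and $\mathcal G\subset X$ countable. Then $\{e^{tA}g\}_{g\in\mathcal G,\,t\in[0,1)}$ is a semi-continuous frame for $X$ if and only if $\{e^{tA}g\}_{g\in\mathcal G,\,t\in[0,\tau)}$ is a semi-continuous frame for $X$ for every $\tau\in(0,\infty)$.
   Context: $e^{tA}=\sum_{n\ge0}(tA)^n/n!$. The family $\{e^{tA}g\}_{g\in\mathcal G,t\in[0,\tau)}$ is a semi-continuous frame if there are $c_1,c_2>0$ with $c_1\|x\|^2\le\sum_{g\in\mathcal G}\int_0^\tau|\langle x,e^{tA}g\rangle|^2dt\le c_2\|x\|^2$ for all $x\in X$. *)

theory Defs
  imports "HOL-Analysis.Analysis"
begin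

text \<open>The library has no complex inner product spaces, so we introduce them
  as a type class: a real normed vector space with a complex scalar
  multiplication and a complex inner product (antilinear in the first
  argument, linear in the second) inducing the norm.\<close>

class complex_inner = real_normed_vector +
  fixes scaleC :: "complex \<Rightarrow> 'a \<Rightarrow> 'a"
    and cinner :: "'a \<Rightarrow> 'a \<Rightarrow> complex"
  assumes scaleC_of_real: "scaleC (of_real r) x = r *\<^sub>R x"
    and scaleC_add_right: "scaleC a (x + y) = scaleC a x + scaleC a y"
    and scaleC_add_left: "scaleC (a + b) x = scaleC a x + scaleC b x"
    and scaleC_scaleC: "scaleC a (scaleC b x) = scaleC (a * b) x"
    and scaleC_one: "scaleC 1 x = x"
    and cinner_commute: "cinner x y = cnj (cinner y x)"
    and cinner_add_right: "cinner x (y + z) = cinner x y + cinner x z"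
    and cinner_scaleC_right: "cinner x (scaleC a y) = a * cinner x y"
    and cinner_nonneg: "cinner x x = complex_of_real (Re (cinner x x)) \<and> 0 \<le> Re (cinner x x)"
    and cinner_eq_zero: "cinner x x = 0 \<longleftrightarrow> x = 0"
    and norm_cinner: "norm x = sqrt (Re (cinner x x))"

definition separable_type :: "'a::topological_space itself \<Rightarrow> bool" where
  "separable_type _ \<longleftrightarrow> (\<exists>D::'a set. countable D \<and> closure D = UNIV)"

definition bounded_clinear_op :: "('a::complex_inner \<Rightarrow> 'a) \<Rightarrow> bool" where
  "bounded_clinear_op A \<longleftrightarrow> bounded_linear A \<and> (\<forall>c x. A (scaleC c x) = scaleC c (A x))"

definition selfadjoint_op :: "('a::complex_inner \<Rightarrow> 'a) \<Rightarrow> bool" where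
  "selfadjoint_op A \<longleftrightarrow> (\<forall>x y. cinner (A x) y = cinner x (A y))"

definition exp_op :: "('a::complex_inner \<Rightarrow> 'a) \<Rightarrow> real \<Rightarrow> 'a \<Rightarrow> 'a" where
  "exp_op A t g = (\<Sum>n. (t ^ n / fact n) *\<^sub>R (A ^^ n) g)"

definition semicont_frame_sum :: "('a::complex_inner \<Rightarrow> 'a) \<Rightarrow> 'a set \<Rightarrow> real \<Rightarrow> 'a \<Rightarrow> ennreal" where
  "semicont_frame_sum A G \<tau> x =
     (\<Sum>\<^sub>\<infinity> g\<in>G. \<integral>\<^sup>+ t. indicator {0..<\<tau>} t * ennreal ((cmod (cinner x (exp_op A t g)))\<^sup>2) \<partial>lborel)"

definition semicont_frame :: "('a::complex_inner \<Rightarrow> 'a) \<Rightarrow> 'a set \<Rightarrow> real \<Rightarrow> bool" where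
  "semicont_frame A G \<tau> \<longleftrightarrow>
     (\<exists>c1 c2. c1 > 0 \<and> c2 > 0 \<and>
        (\<forall>x. ennreal (c1 * (norm x)\<^sup>2) \<le> semicont_frame_sum A G \<tau> x \<and>
             semicont_frame_sum A G \<tau> x \<le> ennreal (c2 * (norm x)\<^sup>2)))"

end

theory Submission
  imports Defs
begin

text \<open>Write \<open>Q(I, x) = \<Sum>\<^sub>g \<integral>\<^sub>I |\<langle>x, e\<^sup>t\<^sup>A g\<rangle>|\<^sup>2 dt\<close>. Self-adjointness of \<open>A\<close> gives
  \<open>Q([s, s + e), x) = Q([0, e), e\<^sup>s\<^sup>A x)\<close>, so covering \<open>[0, \<tau>)\<close> by unit intervals and bounding
  \<open>\<parallel>e\<^sup>s\<^sup>A\<parallel>\<close> yields the upper frame bound for every \<open>\<tau>\<close>.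

  For the lower bound with \<open>\<tau> < 1\<close>, cover \<open>[0, 1)\<close> by \<open>K\<close> intervals of length \<open>e = \<tau>/N\<close> and
  expand \<open>e\<^sup>k\<^sup>e\<^sup>A x = (I + \<Delta>)\<^sup>k x\<close> with \<open>\<Delta> = e\<^sup>e\<^sup>A - I\<close>. A difference \<open>\<Delta>\<^sup>j x\<close> with \<open>j < N\<close> is
  an alternating sum of the \<open>e\<^sup>i\<^sup>e\<^sup>A x\<close> with \<open>i < N\<close>, whose contributions on \<open>[0, e)\<close> are parts
  of \<open>Q([0, \<tau>), x)\<close>. The differences of order \<open>j \<ge> N\<close> have norm \<open>O(\<parallel>\<Delta>\<parallel>\<^sup>N)\<close>, so by the
  upper frame bound their contribution is, for large \<open>N\<close>, at most half of the lower frame bound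
  \<open>c\<^sub>1\<parallel>x\<parallel>\<^sup>2\<close> on \<open>[0, 1)\<close>; what remains is a multiple of \<open>Q([0, \<tau>), x)\<close>.\<close>

section \<open>Complex inner product spaces\<close>

lemma cinner_add_left: "cinner (x + y) (z::'a::complex_inner) = cinner x z + cinner y z"
  by (metis cinner_add_right cinner_commute complex_cnj_add)

lemma cinner_scaleR_right: "cinner x (r *\<^sub>R (y::'a::complex_inner)) = of_real r * cinner x y"
  by (metis cinner_scaleC_right scaleC_of_real)

lemma cinner_scaleR_left: "cinner (r *\<^sub>R (x::'a::complex_inner)) y = of_real r * cinner x y"
  by (metis cinner_commute cinner_scaleR_right complex_cnj_complex_of_real complex_cnj_mult)

lemma cinner_scaleC_left: "cinner (scaleC c (x::'a::complex_inner)) y = cnj c * cinner x y"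
  by (metis cinner_commute cinner_scaleC_right complex_cnj_mult)

lemma cinner_diff_left: "cinner (x - y) (z::'a::complex_inner) = cinner x z - cinner y z"
  using cinner_add_left[of x "-y" z] cinner_scaleR_left[of "-1" y z] by simp

lemma cinner_sum_left: "cinner (\<Sum>i\<in>I. f i) (y::'a::complex_inner) = (\<Sum>i\<in>I. cinner (f i) y)"
  by (induction I rule: infinite_finite_induct)
    (auto simp: cinner_add_left cinner_scaleR_left[of 0, simplified])

lemma cinner_self: "cinner x (x::'a::complex_inner) = of_real ((norm x)\<^sup>2)"
  by (metis cinner_nonneg norm_cinner real_sqrt_pow2)

lemma Re_cinner_le: "Re (cinner x y) \<le> norm x * norm (y::'a::complex_inner)"
proof (cases "y = 0")
  case True
  then show ?thesis using cinner_scaleR_right[of x 0 0] by simp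
next
  case False
  then have ny: "norm y > 0" by simp
  define r where "r = - Re (cinner x y) / (norm y)\<^sup>2"
  have Re_sym: "Re (cinner y x) = Re (cinner x y)"
    by (metis cinner_commute complex_cnj_cnj cnj.simps(1))
  have "cinner (x + r *\<^sub>R y) (x + r *\<^sub>R y)
      = cinner x x + of_real r * cinner x y + of_real r * cinner y x + of_real (r * r) * cinner y y"
    by (simp add: cinner_add_left cinner_add_right cinner_scaleR_left cinner_scaleR_right algebra_simps)
  then have "Re (of_real ((norm (x + r *\<^sub>R y))\<^sup>2)) = Re (of_real ((norm x)\<^sup>2) + of_real r * cinner x y
      + of_real r * cinner y x + of_real (r * r) * of_real ((norm y)\<^sup>2))"
    by (simp only: cinner_self)
  then have "(norm (x + r *\<^sub>R y))\<^sup>2 = (norm x)\<^sup>2 + 2 * r * Re (cinner x y) + r * r * (norm y)\<^sup>2"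
    using Re_sym by (simp only: plus_complex.sel Re_complex_of_real) simp
  then have "0 \<le> (norm x)\<^sup>2 + 2 * r * Re (cinner x y) + r * r * (norm y)\<^sup>2"
    by (metis zero_le_power2)
  also have "\<dots> = (norm x)\<^sup>2 - (Re (cinner x y))\<^sup>2 / (norm y)\<^sup>2"
    using ny by (simp add: r_def field_simps power2_eq_square)
  finally have "(Re (cinner x y))\<^sup>2 \<le> (norm x * norm y)\<^sup>2"
    using ny by (simp add: field_simps power_mult_distrib)
  then show ?thesis
    by (rule power2_le_imp_le) simp
qed

text \<open>Cauchy--Schwarz: rotate \<open>y\<close> by a unimodular scalar so that the inner product becomes real.\<close>

lemma cinner_Cauchy_Schwarz: "cmod (cinner x y) \<le> norm x * norm (y::'a::complex_inner)"
proof (cases "cinner x y = 0")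
  case True
  then show ?thesis by simp
next
  case False
  define c where "c = cnj (cinner x y) / of_real (cmod (cinner x y))"
  have "cmod c = 1" using False by (simp add: c_def norm_divide)
  then have norm_cy: "norm (scaleC c y) = norm y"
    by (simp add: norm_cinner cinner_scaleC_left cinner_scaleC_right mult.assoc[symmetric]
        complex_norm_square[symmetric])
  have "cinner x (scaleC c y) = cnj (cinner x y) * cinner x y / of_real (cmod (cinner x y))"
    by (simp add: c_def cinner_scaleC_right)
  also have "\<dots> = of_real (cmod (cinner x y))"
    using False by (simp add: complex_norm_square[symmetric] power2_eq_square mult.commute)
  finally have "cmod (cinner x y) = Re (cinner x (scaleC c y))" by simp
  also have "\<dots> \<le> norm x * norm y" using Re_cinner_le[of x "scaleC c y"] norm_cy by simp
  finally show ?thesis .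
qed

lemma bounded_linear_cinner_right: "bounded_linear (\<lambda>y. cinner x (y::'a::complex_inner))"
proof (rule bounded_linear_intro[where K="norm x"])
  show "cinner x (y + z) = cinner x y + cinner x z" for y z by (rule cinner_add_right)
  show "cinner x (r *\<^sub>R y) = r *\<^sub>R cinner x y" for r y
    by (simp add: cinner_scaleR_right scaleR_conv_of_real)
  show "norm (cinner x y) \<le> norm y * norm x" for y
    using cinner_Cauchy_Schwarz[of x y] by (simp add: mult.commute)
qed

lemma cinner_funpow_selfadjoint:
  assumes "selfadjoint_op A"
  shows "cinner ((A ^^ n) x) y = cinner x ((A ^^ n) y)"
proof (induction n arbitrary: y)
  case (Suc n)
  have "cinner ((A ^^ Suc n) x) y = cinner ((A ^^ n) x) (A y)"
    using assms by (simp add: selfadjoint_op_def)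
  also have "\<dots> = cinner x ((A ^^ Suc n) y)"
    by (simp add: Suc funpow_swap1)
  finally show ?case .
qed simp

section \<open>Series and elementary estimates\<close>

text \<open>The library versions of the next two lemmas require the class \<open>banach\<close>, which the
  sort \<open>{real_normed_vector, complete_space}\<close> is not known to belong to.\<close>

lemma complete_summable_norm_cancel:
  fixes f :: "nat \<Rightarrow> 'a::{real_normed_vector,complete_space}"
  assumes "summable (\<lambda>n. norm (f n))"
  shows "summable f"
proof -
  let ?S = "\<lambda>n. \<Sum>i<n. f i" and ?T = "\<lambda>n. \<Sum>i<n. norm (f i)"
  have dist_le: "dist (?S m) (?S n) \<le> dist (?T m) (?T n)" for m n
  proof -
    have "norm (?S n - ?S m) \<le> ?T n - ?T m" if "m \<le> n" for m n
    proof -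
      have "?S n - ?S m = (\<Sum>i=m..<n. f i)" "?T n - ?T m = (\<Sum>i=m..<n. norm (f i))"
        using that by (metis sum_diff_nat_ivl lessThan_atLeast0 zero_le)+
      then show ?thesis by (simp add: norm_sum)
    qed
    then show ?thesis
      by (cases m n rule: le_cases) (fastforce simp: dist_norm dist_real_def norm_minus_commute)+
  qed
  have "Cauchy ?T" using assms by (simp add: summable_iff_convergent convergent_Cauchy)
  have "Cauchy ?S"
  proof (rule metric_CauchyI)
    fix e :: real
    assume "0 < e"
    then obtain M where "\<forall>m\<ge>M. \<forall>n\<ge>M. dist (?T m) (?T n) < e"
      using \<open>Cauchy ?T\<close> metric_CauchyD by blast
    then show "\<exists>M. \<forall>m\<ge>M. \<forall>n\<ge>M. dist (?S m) (?S n) < e"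
      using dist_le by (meson le_less_trans)
  qed
  then show ?thesis by (simp add: summable_iff_convergent Cauchy_convergent)
qed

lemma complete_norm_suminf_le:
  fixes f :: "nat \<Rightarrow> 'a::{real_normed_vector,complete_space}"
  assumes "summable (\<lambda>n. norm (f n))"
  shows "norm (suminf f) \<le> (\<Sum>n. norm (f n))"
proof (rule LIMSEQ_le)
  show "(\<lambda>n. norm (\<Sum>i<n. f i)) \<longlonglongrightarrow> norm (suminf f)"
    using summable_LIMSEQ[OF complete_summable_norm_cancel[OF assms]] by (rule tendsto_norm)
  show "(\<lambda>n. \<Sum>i<n. norm (f i)) \<longlonglongrightarrow> (\<Sum>n. norm (f n))"
    using assms by (rule summable_LIMSEQ)
  show "\<exists>N. \<forall>n\<ge>N. norm (\<Sum>i<n. f i) \<le> (\<Sum>i<n. norm (f i))"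
    by (auto intro: norm_sum)
qed

text \<open>The difference between the square and the triangle of partial products is dominated by
  the same difference for the products of the norms, which vanishes by the scalar Cauchy product
  theorem.\<close>

lemma bounded_bilinear_square_minus_triangle_tendsto_zero:
  fixes a :: "nat \<Rightarrow> 'a::real_normed_vector" and b :: "nat \<Rightarrow> 'b::real_normed_vector"
  assumes "bounded_bilinear pr"
    and "summable (\<lambda>k. norm (a k))" and "summable (\<lambda>k. norm (b k))"
  shows "(\<lambda>n. pr (\<Sum>i<n. a i) (\<Sum>j<n. b j) - (\<Sum>k<n. \<Sum>i\<le>k. pr (a i) (b (k - i)))
    :: 'c::real_normed_vector) \<longlonglongrightarrow> 0"
proof -
  interpret bounded_bilinear pr by fact
  obtain K where K: "\<And>x y. norm (pr x y) \<le> norm x * norm y * K" using pos_bounded by blast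
  define square where "square n = {..<n} \<times> {..<n}" for n :: nat
  define triangle where "triangle n = {(i, j). i + j < n}" for n :: nat
  have fin: "finite (square n)" and sub: "triangle n \<subseteq> square n" for n
    by (auto simp: square_def triangle_def)
  define g where "g = (\<lambda>(i, j). pr (a i) (b j))"
  define h where "h = (\<lambda>(i, j). norm (a i) * norm (b j))"
  have "pr (\<Sum>i<n. a i) (\<Sum>j<n. b j) = sum g (square n)" for n
    unfolding sum_left unfolding sum_right by (simp add: g_def square_def sum.cartesian_product)
  moreover have "(\<Sum>k<n. \<Sum>i\<le>k. pr (a i) (b (k - i))) = sum g (triangle n)" for n
    using sum.triangle_reindex[of "\<lambda>i j. pr (a i) (b j)" n] by (simp add: g_def triangle_def)
  ultimately have g_eq: "pr (\<Sum>i<n. a i) (\<Sum>j<n. b j) - (\<Sum>k<n. \<Sum>i\<le>k. pr (a i) (b (k - i)))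
      = sum g (square n) - sum g (triangle n)" for n
    by simp
  have "(\<lambda>n. (\<Sum>i<n. norm (a i)) * (\<Sum>j<n. norm (b j))) \<longlonglongrightarrow> (\<Sum>k. norm (a k)) * (\<Sum>k. norm (b k))"
    using assms(2,3) by (intro tendsto_mult summable_LIMSEQ)
  moreover have "(\<lambda>n. \<Sum>k<n. \<Sum>i\<le>k. norm (a i) * norm (b (k - i))) \<longlonglongrightarrow> (\<Sum>k. norm (a k)) * (\<Sum>k. norm (b k))"
    using Cauchy_product_sums[of "\<lambda>k. norm (a k)" "\<lambda>k. norm (b k)"] assms(2,3) by (simp add: sums_def)
  ultimately have "(\<lambda>n. K * ((\<Sum>i<n. norm (a i)) * (\<Sum>j<n. norm (b j))
      - (\<Sum>k<n. \<Sum>i\<le>k. norm (a i) * norm (b (k - i))))) \<longlonglongrightarrow> 0"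
    using tendsto_mult_left[OF tendsto_diff, of _ _ _ _ _ K] by fastforce
  moreover have "(\<Sum>i<n. norm (a i)) * (\<Sum>j<n. norm (b j)) = sum h (square n)" for n
    unfolding sum_product by (simp add: h_def square_def sum.cartesian_product)
  moreover have "(\<Sum>k<n. \<Sum>i\<le>k. norm (a i) * norm (b (k - i))) = sum h (triangle n)" for n
    using sum.triangle_reindex[of "\<lambda>i j. norm (a i) * norm (b j)" n] by (simp add: h_def triangle_def)
  ultimately have h_lim: "(\<lambda>n. K * (sum h (square n) - sum h (triangle n))) \<longlonglongrightarrow> 0"
    by simp
  have bound: "norm (sum g (square n) - sum g (triangle n)) \<le> K * (sum h (square n) - sum h (triangle n))" for n
  proof -
    have "norm (sum g (square n) - sum g (triangle n)) = norm (sum g (square n - triangle n))"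
      using fin sub by (simp add: sum_diff)
    also have "\<dots> \<le> (\<Sum>p\<in>square n - triangle n. K * h p)"
      by (rule order_trans[OF norm_sum sum_mono]) (use K in \<open>auto simp: g_def h_def mult.commute\<close>)
    also have "\<dots> = K * (sum h (square n) - sum h (triangle n))"
      using fin sub by (simp add: sum_distrib_left[symmetric] sum_diff)
    finally show ?thesis .
  qed
  show ?thesis
    unfolding g_eq by (rule Lim_null_comparison[OF always_eventually h_lim]) (use bound in blast)
qed

lemma bounded_bilinear_Cauchy_product_sums:
  fixes a :: "nat \<Rightarrow> 'a::real_normed_vector" and b :: "nat \<Rightarrow> 'b::real_normed_vector"
  assumes "bounded_bilinear pr" and "a sums \<alpha>" and "b sums \<beta>"
    and "summable (\<lambda>k. norm (a k))" and "summable (\<lambda>k. norm (b k))"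
  shows "(\<lambda>k. \<Sum>i\<le>k. pr (a i) (b (k - i))) sums (pr \<alpha> \<beta> :: 'c::real_normed_vector)"
proof -
  have "(\<lambda>n. pr (\<Sum>i<n. a i) (\<Sum>j<n. b j)) \<longlonglongrightarrow> pr \<alpha> \<beta>"
    using assms(2,3) unfolding sums_def by (rule bounded_bilinear.tendsto[OF assms(1)])
  then show ?thesis
    unfolding sums_def
    by (rule Lim_transform2[OF _ bounded_bilinear_square_minus_triangle_tendsto_zero[OF assms(1,4,5)]])
qed

lemma exp_real_sums: "(\<lambda>n. x ^ n / fact n) sums exp (x::real)"
  using exp_converges[of x] by (simp add: divide_inverse mult.commute)

lemma exp_real_tail_sums:
  "(\<lambda>n. x ^ (n + M) / fact (n + M)) sums (exp x - (\<Sum>n<M. x ^ n / fact n :: real))"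
  by (rule sums_split_initial_segment[OF exp_real_sums])

lemma bounded_linear_funpow:
  fixes f :: "'a::real_normed_vector \<Rightarrow> 'a"
  assumes "bounded_linear f"
  shows "bounded_linear (f ^^ n)"
  by (induction n) (auto intro: bounded_linear_compose[OF assms] bounded_linear_ident simp: id_def)

lemma norm_funpow_le:
  fixes f :: "'a::real_normed_vector \<Rightarrow> 'a"
  assumes "bounded_linear f"
  shows "norm ((f ^^ n) y) \<le> onorm f ^ n * norm y"
proof (induction n)
  case (Suc n)
  have "norm ((f ^^ Suc n) y) \<le> onorm f * norm ((f ^^ n) y)"
    using onorm[OF assms] by simp
  also have "\<dots> \<le> onorm f * (onorm f ^ n * norm y)"
    by (rule mult_left_mono[OF Suc onorm_pos_le[OF assms]])
  finally show ?case by (simp add: mult.assoc)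
qed simp

lemma linear_funpow_binomial:
  fixes D :: "'a::real_vector \<Rightarrow> 'a"
  assumes "linear D"
  shows "((\<lambda>y. y + D y) ^^ k) x = (\<Sum>j\<le>k. real (k choose j) *\<^sub>R (D ^^ j) x)"
proof (induction k)
  case (Suc k)
  let ?f = "\<lambda>j. (D ^^ j) x"
  have "((\<lambda>y. y + D y) ^^ Suc k) x
      = (\<Sum>j\<le>k. real (k choose j) *\<^sub>R ?f j) + (\<Sum>j\<le>k. real (k choose j) *\<^sub>R ?f (Suc j))"
    using Suc by (simp add: linear_sum[OF assms] linear_scale[OF assms])
  also have "(\<Sum>j\<le>k. real (k choose j) *\<^sub>R ?f j) = (\<Sum>j\<le>Suc k. real (k choose j) *\<^sub>R ?f j)"
    by simp
  also have "\<dots> = ?f 0 + (\<Sum>j\<le>k. real (k choose Suc j) *\<^sub>R ?f (Suc j))"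
    by (subst sum.atMost_Suc_shift) simp
  also have "?f 0 + (\<Sum>j\<le>k. real (k choose Suc j) *\<^sub>R ?f (Suc j)) + (\<Sum>j\<le>k. real (k choose j) *\<^sub>R ?f (Suc j))
      = ?f 0 + (\<Sum>j\<le>k. real (Suc k choose Suc j) *\<^sub>R ?f (Suc j))"
    by (simp add: scaleR_add_left sum.distrib)
  also have "\<dots> = (\<Sum>j\<le>Suc k. real (Suc k choose j) *\<^sub>R ?f j)"
    by (subst sum.atMost_Suc_shift) simp
  finally show ?case .
qed simp

lemma four_pow: "(4::real) ^ k = (2 ^ k)\<^sup>2"
  by (simp add: power2_eq_square power_mult_distrib[symmetric])

lemma binomial_squared_le: "(real (k choose j))\<^sup>2 \<le> 4 ^ k"
proof -
  have "real (k choose j) \<le> 2 ^ k"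
    using binomial_le_pow2[of k j] by (metis of_nat_le_iff of_nat_numeral of_nat_power)
  then have "(real (k choose j))\<^sup>2 \<le> (2 ^ k)\<^sup>2"
    by (intro power_mono) auto
  then show ?thesis
    by (simp only: four_pow)
qed

lemma exp_div_minus_one_le:
  fixes \<beta> :: real
  assumes "0 \<le> \<beta>" and "1 \<le> N" and "2 ^ (m + 2) * \<beta> \<le> real N"
  shows "exp (\<beta> / real N) - 1 \<le> 1 / 2 ^ (m + 1)"
proof -
  have small: "\<beta> / real N \<le> 1 / 2 ^ (m + 2)"
    using assms(2,3) by (simp add: field_simps)
  also have "\<dots> \<le> 1 / 2"
    using power_increasing[of 1 "m + 2" "2::real"] by (intro frac_le) simp_all
  finally have "exp (\<beta> / real N) \<le> 1 + 2 * (\<beta> / real N)"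
    using assms(1) by (intro real_exp_bound_lemma) simp_all
  then have "exp (\<beta> / real N) - 1 \<le> 2 * (1 / 2 ^ (m + 2))"
    using small by linarith
  then show ?thesis
    by simp
qed

lemma times_pow_le_half_pow:
  fixes \<delta> :: real
  assumes "0 \<le> \<delta>" and "\<delta> \<le> 1 / 2 ^ (m + 1)"
  shows "real N * (4 ^ m * \<delta>\<^sup>2) ^ N \<le> (1 / 2) ^ N"
proof -
  have "4 ^ m * \<delta>\<^sup>2 \<le> (4::real) ^ m * (1 / 2 ^ (m + 1))\<^sup>2"
    using assms by (intro mult_left_mono power_mono) simp_all
  also have "\<dots> = 1 / 4"
    by (simp add: four_pow power_divide power_add power_mult_distrib)
  finally have "(4 ^ m * \<delta>\<^sup>2) ^ N \<le> (1 / 4 :: real) ^ N"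
    using assms(1) by (intro power_mono) simp_all
  moreover have "real N \<le> 2 ^ N"
    by (metis less_exp less_imp_le of_nat_le_iff of_nat_numeral of_nat_power)
  ultimately have "real N * (4 ^ m * \<delta>\<^sup>2) ^ N \<le> 2 ^ N * (1 / 4) ^ N"
    using assms(1) by (intro mult_mono) simp_all
  also have "\<dots> = (1 / 2) ^ N"
    by (simp add: power_mult_distrib[symmetric])
  finally show ?thesis .
qed

text \<open>The factor \<open>\<delta>\<^bsup>2N\<^esup>\<close> with \<open>\<delta> = e\<^bsup>\<beta>/N\<^esup> - 1 = O(1/N)\<close> beats the geometric growth \<open>4\<^bsup>mN\<^esup>\<close>.\<close>

lemma exists_exp_step_small:
  fixes \<beta> \<epsilon> :: real
  assumes "0 \<le> \<beta>" and "0 < \<epsilon>" and "1 \<le> m"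
  shows "\<exists>N\<ge>1. exp (\<beta> / real N) - 1 \<le> 1
    \<and> real (m * N) * 4 ^ (m * N) * (exp (\<beta> / real N) - 1) ^ (2 * N) \<le> \<epsilon>"
proof -
  obtain N0 where N0: "(1 / 2 :: real) ^ N0 < \<epsilon> / real m"
    using real_arch_pow_inv[of "\<epsilon> / real m" "1 / 2"] assms by auto
  define N where "N = max (max N0 1) (nat \<lceil>2 ^ (m + 2) * \<beta>\<rceil>)"
  define \<delta> where "\<delta> = exp (\<beta> / real N) - 1"
  have "1 \<le> N" and "N0 \<le> N" and N_large: "2 ^ (m + 2) * \<beta> \<le> real N"
    unfolding N_def by linarith+
  then have \<delta>_small: "\<delta> \<le> 1 / 2 ^ (m + 1)"
    unfolding \<delta>_def by (intro exp_div_minus_one_le[OF assms(1) \<open>1 \<le> N\<close> N_large])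
  have "0 \<le> \<delta>"
    using assms(1) by (simp add: \<delta>_def)
  have "(1 / 2 :: real) ^ N \<le> (1 / 2) ^ N0"
    by (rule power_decreasing) (use \<open>N0 \<le> N\<close> in auto)
  with times_pow_le_half_pow[OF \<open>0 \<le> \<delta>\<close> \<delta>_small, of N] N0
  have "real N * (4 ^ m * \<delta>\<^sup>2) ^ N \<le> \<epsilon> / real m"
    by linarith
  then have "real m * (real N * (4 ^ m * \<delta>\<^sup>2) ^ N) \<le> \<epsilon>"
    using assms(3) by (simp add: field_simps)
  moreover have "4 ^ (m * N) * \<delta> ^ (2 * N) = (4 ^ m * \<delta>\<^sup>2) ^ N"
    by (simp only: power_mult power_mult_distrib)
  ultimately have "real (m * N) * 4 ^ (m * N) * \<delta> ^ (2 * N) \<le> \<epsilon>"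
    by (simp add: mult.assoc)
  moreover have "\<delta> \<le> 1"
    using \<delta>_small by (smt (verit) one_le_power divide_le_eq_1_pos)
  ultimately show ?thesis
    using \<open>1 \<le> N\<close> by (auto simp: \<delta>_def)
qed

lemma indicator_le_sum_indicator:
  assumes "0 < e" and "c \<le> real K * e"
  shows "(indicator {0..<c} t :: ennreal) \<le> (\<Sum>k<K. indicator {real k * e..<real (Suc k) * e} t)"
proof (cases "t \<in> {0..<c}")
  case True
  define k where "k = nat \<lfloor>t / e\<rfloor>"
  have "real k \<le> t / e" "t / e < real k + 1"
    using True assms(1) by (auto simp: k_def)
  then have t_in: "t \<in> {real k * e..<real (Suc k) * e}"
    using assms(1) by (simp add: field_simps)
  have "t / e < real K"
    using True assms by (simp add: field_simps)
  then have "k < K"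
    using \<open>real k \<le> t / e\<close> by linarith
  then show ?thesis
    using t_in True by (intro member_le_sum[where i=k, THEN order_trans[rotated]]) auto
qed simp

lemma infsum_cmult_ennreal:
  fixes f :: "'i \<Rightarrow> ennreal"
  assumes "c < top"
  shows "(\<Sum>\<^sub>\<infinity> g\<in>G. c * f g) = c * (\<Sum>\<^sub>\<infinity> g\<in>G. f g)"
proof -
  have "(sum f \<longlongrightarrow> infsum f G) (finite_subsets_at_top G)"
    using has_sum_infsum[of f G] by (simp add: has_sum_def nonneg_summable_on_complete)
  then have "((\<lambda>F. c * sum f F) \<longlongrightarrow> c * infsum f G) (finite_subsets_at_top G)"
    by (rule ennreal_tendsto_cmult[OF assms])
  then show ?thesis
    by (intro infsumI) (simp add: has_sum_def sum_distrib_left)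
qed

lemma infsum_sum_ennreal:
  fixes f :: "'i \<Rightarrow> 'g \<Rightarrow> ennreal"
  assumes "finite I"
  shows "(\<Sum>\<^sub>\<infinity> g\<in>G. \<Sum>i\<in>I. f i g) = (\<Sum>i\<in>I. \<Sum>\<^sub>\<infinity> g\<in>G. f i g)"
  using assms by (induction I rule: finite_induct) (simp_all add: infsum_add nonneg_summable_on_complete)

lemma ennreal_le_of_le_mult_add:
  fixes B :: ennreal
  assumes "0 < M" and "0 \<le> r" and "r \<le> X / 2" and "ennreal X \<le> ennreal M * B + ennreal r"
  shows "ennreal (X / (2 * M)) \<le> B"
proof (cases B)
  case (real b)
  then have "X \<le> M * b + r"
    using assms by (simp add: ennreal_mult[symmetric] ennreal_plus[symmetric] del: ennreal_plus)
  then show ?thesis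
    using assms real by (simp add: ennreal_leI field_simps)
qed simp

section \<open>Frame sums over intervals\<close>

definition frame_sum_on :: "('a::complex_inner \<Rightarrow> 'a) \<Rightarrow> 'a set \<Rightarrow> real \<Rightarrow> real \<Rightarrow> 'a \<Rightarrow> ennreal" where
  "frame_sum_on A G a b y =
     (\<Sum>\<^sub>\<infinity> g\<in>G. \<integral>\<^sup>+ t. indicator {a..<b} t * ennreal ((cmod (cinner y (exp_op A t g)))\<^sup>2) \<partial>lborel)"

lemma semicont_frame_sum_eq: "semicont_frame_sum A G \<tau> = frame_sum_on A G 0 \<tau>"
  by (simp add: fun_eq_iff semicont_frame_sum_def frame_sum_on_def)

lemma frame_sum_on_mono:
  "a \<le> a' \<Longrightarrow> b' \<le> b \<Longrightarrow> frame_sum_on A G a' b' y \<le> frame_sum_on A G a b y"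
  unfolding frame_sum_on_def
  by (intro infsum_mono nn_integral_mono mult_right_mono)
    (auto simp: indicator_def nonneg_summable_on_complete)

definition exp_op_diff :: "('a::complex_inner \<Rightarrow> 'a) \<Rightarrow> real \<Rightarrow> 'a \<Rightarrow> 'a" where
  "exp_op_diff A e y = exp_op A e y - y"

context
  fixes A :: "'a::{complex_inner,complete_space} \<Rightarrow> 'a"
  assumes A: "bounded_linear A"
begin

subsection \<open>The exponential series\<close>

lemma norm_exp_op_term_le:
  "norm ((t ^ n / fact n) *\<^sub>R (A ^^ n) y) \<le> (\<bar>t\<bar> * onorm A) ^ n / fact n * norm y"
proof -
  have "norm ((t ^ n / fact n) *\<^sub>R (A ^^ n) y) = \<bar>t\<bar> ^ n / fact n * norm ((A ^^ n) y)"
    by (simp add: power_abs)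
  also have "\<dots> \<le> \<bar>t\<bar> ^ n / fact n * (onorm A ^ n * norm y)"
    by (rule mult_left_mono[OF norm_funpow_le[OF A]]) simp
  finally show ?thesis by (simp add: power_mult_distrib)
qed

lemma summable_norm_exp_op_terms:
  "summable (\<lambda>n. norm ((t ^ n / fact n) *\<^sub>R (A ^^ n) y))"
  by (rule summable_comparison_test'[where N=0,
        OF summable_mult2[OF sums_summable[OF exp_real_sums[of "\<bar>t\<bar> * onorm A"]]]])
    (use norm_exp_op_term_le in simp)

lemma exp_op_sums: "(\<lambda>n. (t ^ n / fact n) *\<^sub>R (A ^^ n) y) sums exp_op A t y"
  unfolding exp_op_def
  by (rule summable_sums[OF complete_summable_norm_cancel[OF summable_norm_exp_op_terms]])

lemma norm_exp_op_tail_le: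
  "norm (exp_op A t y - (\<Sum>n<M. (t ^ n / fact n) *\<^sub>R (A ^^ n) y))
     \<le> (exp (\<bar>t\<bar> * onorm A) - (\<Sum>n<M. (\<bar>t\<bar> * onorm A) ^ n / fact n)) * norm y"
proof -
  let ?x = "\<bar>t\<bar> * onorm A"
  let ?u = "\<lambda>n. (t ^ (n + M) / fact (n + M)) *\<^sub>R (A ^^ (n + M)) y"
  have tail_sums: "?u sums (exp_op A t y - (\<Sum>n<M. (t ^ n / fact n) *\<^sub>R (A ^^ n) y))"
    by (rule sums_split_initial_segment[OF exp_op_sums])
  have summable_norm: "summable (\<lambda>n. norm (?u n))"
    using summable_ignore_initial_segment[OF summable_norm_exp_op_terms] .
  have "norm (exp_op A t y - (\<Sum>n<M. (t ^ n / fact n) *\<^sub>R (A ^^ n) y)) = norm (suminf ?u)"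
    using sums_unique[OF tail_sums] by simp
  also have "\<dots> \<le> (\<Sum>n. norm (?u n))"
    by (rule complete_norm_suminf_le[OF summable_norm])
  also have "\<dots> \<le> (\<Sum>n. ?x ^ (n + M) / fact (n + M) * norm y)"
    by (intro suminf_le summable_norm norm_exp_op_term_le summable_mult2
        sums_summable[OF exp_real_tail_sums])
  also have "\<dots> = (exp ?x - (\<Sum>n<M. ?x ^ n / fact n)) * norm y"
    by (rule sums_unique[OF sums_mult2[OF exp_real_tail_sums], symmetric])
  finally show ?thesis .
qed

lemma norm_exp_op_le: "norm (exp_op A t y) \<le> exp (\<bar>t\<bar> * onorm A) * norm y"
  using norm_exp_op_tail_le[of t y 0] by simp

lemma norm_exp_op_minus_le: "norm (exp_op A t y - y) \<le> (exp (\<bar>t\<bar> * onorm A) - 1) * norm y"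
  using norm_exp_op_tail_le[of t y 1] by simp

lemma exp_op_zero: "exp_op A 0 y = y"
  using norm_exp_op_minus_le[of 0 y] by simp

lemma bounded_linear_exp_op: "bounded_linear (exp_op A t)"
proof (rule bounded_linear_intro[where K="exp (\<bar>t\<bar> * onorm A)"])
  have linear_pow: "linear (A ^^ n)" for n
    by (rule bounded_linear.linear[OF bounded_linear_funpow[OF A]])
  show "exp_op A t (x + y) = exp_op A t x + exp_op A t y" for x y
    using sums_add[OF exp_op_sums[of t x] exp_op_sums[of t y]] exp_op_sums[of t "x + y"]
    by (simp add: linear_add[OF linear_pow] scaleR_add_right sums_unique2)
  show "exp_op A t (r *\<^sub>R x) = r *\<^sub>R exp_op A t x" for r x
    using sums_scaleR_right[OF exp_op_sums[of t x], of r] exp_op_sums[of t "r *\<^sub>R x"]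
    by (simp add: linear_scale[OF linear_pow] sums_unique2 mult.commute)
  show "norm (exp_op A t x) \<le> norm x * exp (\<bar>t\<bar> * onorm A)" for x
    using norm_exp_op_le[of t x] by (simp add: mult.commute)
qed

lemma exp_op_blinfun_sums:
  "(\<lambda>n. (t ^ n / fact n) *\<^sub>R Blinfun (A ^^ n)) sums Blinfun (exp_op A t)"
proof -
  let ?x = "\<bar>t\<bar> * onorm A"
  let ?E = "\<lambda>M. exp ?x - (\<Sum>n<M. ?x ^ n / fact n)"
  have apply_pow: "blinfun_apply (Blinfun (A ^^ n)) = A ^^ n" for n
    by (rule bounded_linear_Blinfun_apply[OF bounded_linear_funpow[OF A]])
  have apply_exp: "blinfun_apply (Blinfun (exp_op A t)) = exp_op A t"
    by (rule bounded_linear_Blinfun_apply[OF bounded_linear_exp_op])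
  have bound: "norm ((\<Sum>n<M. (t ^ n / fact n) *\<^sub>R Blinfun (A ^^ n)) - Blinfun (exp_op A t)) \<le> ?E M" for M
  proof (rule norm_blinfun_bound)
    show "0 \<le> ?E M"
      using sums_le[OF _ sums_zero exp_real_tail_sums[of ?x M]] onorm_pos_le[OF A] by simp
    show "norm (blinfun_apply ((\<Sum>n<M. (t ^ n / fact n) *\<^sub>R Blinfun (A ^^ n)) - Blinfun (exp_op A t)) y)
        \<le> ?E M * norm y" for y
    proof -
      have "blinfun_apply ((\<Sum>n<M. (t ^ n / fact n) *\<^sub>R Blinfun (A ^^ n)) - Blinfun (exp_op A t)) y
          = - (exp_op A t y - (\<Sum>n<M. (t ^ n / fact n) *\<^sub>R (A ^^ n) y))"
        by (simp add: blinfun.diff_left blinfun.scaleR_left blinfun.sum_left apply_pow apply_exp)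
      then show ?thesis
        using norm_exp_op_tail_le[of t y M] by (simp only: norm_minus_cancel)
    qed
  qed
  have "?E \<longlonglongrightarrow> 0"
    using tendsto_diff[OF tendsto_const exp_real_sums[of ?x, unfolded sums_def], of "exp ?x"] by simp
  then have "(\<lambda>M. (\<Sum>n<M. (t ^ n / fact n) *\<^sub>R Blinfun (A ^^ n)) - Blinfun (exp_op A t)) \<longlonglongrightarrow> 0"
    by (rule Lim_null_comparison[OF always_eventually, rotated]) (use bound in blast)
  then show ?thesis
    unfolding sums_def by (rule LIM_zero_cancel)
qed

lemma norm_exp_op_blinfun_term_le:
  "norm ((t ^ n / fact n) *\<^sub>R Blinfun (A ^^ n)) \<le> (\<bar>t\<bar> * onorm A) ^ n / fact n"
proof (rule norm_blinfun_bound)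
  show "0 \<le> (\<bar>t\<bar> * onorm A) ^ n / fact n"
    using onorm_pos_le[OF A] by simp
  show "norm (blinfun_apply ((t ^ n / fact n) *\<^sub>R Blinfun (A ^^ n)) y) \<le> (\<bar>t\<bar> * onorm A) ^ n / fact n * norm y" for y
    using norm_exp_op_term_le[of t n y]
    by (simp add: blinfun.scaleR_left bounded_linear_Blinfun_apply[OF bounded_linear_funpow[OF A]])
qed

lemma exp_op_add: "exp_op A s (exp_op A t y) = exp_op A (s + t) y"
proof -
  let ?a = "\<lambda>n. (s ^ n / fact n) *\<^sub>R Blinfun (A ^^ n)"
  let ?b = "\<lambda>n. (t ^ n / fact n) *\<^sub>R (A ^^ n) y"
  have "(\<lambda>k. \<Sum>i\<le>k. blinfun_apply (?a i) (?b (k - i)))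
      sums blinfun_apply (Blinfun (exp_op A s)) (exp_op A t y)"
  proof (rule bounded_bilinear_Cauchy_product_sums[OF bounded_bilinear_blinfun_apply
        exp_op_blinfun_sums exp_op_sums _ summable_norm_exp_op_terms])
    show "summable (\<lambda>n. norm (?a n))"
      by (rule summable_comparison_test'[where N=0, OF sums_summable[OF exp_real_sums]])
        (use norm_exp_op_blinfun_term_le in simp)
  qed
  moreover have "(\<Sum>i\<le>k. blinfun_apply (?a i) (?b (k - i))) = ((s + t) ^ k / fact k) *\<^sub>R (A ^^ k) y" for k
  proof -
    have "blinfun_apply (?a i) (?b (k - i)) = (s ^ i / fact i * (t ^ (k - i) / fact (k - i))) *\<^sub>R (A ^^ k) y"
      if "i \<le> k" for i
    proof -
      have "(A ^^ i) ((A ^^ (k - i)) y) = (A ^^ k) y"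
        using that funpow_add[of i "k - i" A] by simp
      then show ?thesis
        by (simp add: blinfun.scaleR_left bounded_linear_Blinfun_apply[OF bounded_linear_funpow[OF A]]
            linear_scale[OF bounded_linear.linear[OF bounded_linear_funpow[OF A]]])
    qed
    then have "(\<Sum>i\<le>k. blinfun_apply (?a i) (?b (k - i)))
        = (\<Sum>i\<le>k. s ^ i / fact i * (t ^ (k - i) / fact (k - i))) *\<^sub>R (A ^^ k) y"
      by (simp add: scaleR_sum_left)
    also have "(\<Sum>i\<le>k. s ^ i / fact i * (t ^ (k - i) / fact (k - i))) = (s + t) ^ k / fact k"
      using exp_series_add_commuting[of s t k] by (simp add: divide_inverse mult.commute)
    finally show ?thesis .
  qed
  ultimately have "(\<lambda>k. ((s + t) ^ k / fact k) *\<^sub>R (A ^^ k) y) sums exp_op A s (exp_op A t y)"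
    by (simp add: bounded_linear_Blinfun_apply[OF bounded_linear_exp_op])
  then show ?thesis
    using exp_op_sums sums_unique2 by metis
qed

lemma continuous_on_exp_op: "continuous_on UNIV (\<lambda>t. exp_op A t y)"
proof (rule continuous_at_imp_continuous_on, intro ballI)
  fix t0 :: real
  let ?r = "\<lambda>t. exp (\<bar>t0\<bar> * onorm A) * ((exp (\<bar>t - t0\<bar> * onorm A) - 1) * norm y)"
  have bound: "norm (exp_op A t y - exp_op A t0 y) \<le> ?r t" for t
  proof -
    have "exp_op A t y - exp_op A t0 y = exp_op A t0 (exp_op A (t - t0) y - y)"
      by (simp add: exp_op_add linear_diff[OF bounded_linear.linear[OF bounded_linear_exp_op]])
    then show ?thesis
      using order_trans[OF norm_exp_op_le mult_left_mono[OF norm_exp_op_minus_le]]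
      by simp
  qed
  have "(?r \<longlongrightarrow> ?r t0) (at t0)"
    by (intro tendsto_intros)
  then have "(?r \<longlongrightarrow> 0) (at t0)"
    by simp
  then have "((\<lambda>t. exp_op A t y - exp_op A t0 y) \<longlongrightarrow> 0) (at t0)"
    by (rule Lim_null_comparison[OF always_eventually, rotated]) (use bound in blast)
  then show "isCont (\<lambda>t. exp_op A t y) t0"
    unfolding isCont_def by (rule LIM_zero_cancel)
qed

lemma cinner_exp_op_sums:
  "(\<lambda>n. of_real (t ^ n / fact n) * cinner x ((A ^^ n) y)) sums cinner x (exp_op A t y)"
  using bounded_linear.sums[OF bounded_linear_cinner_right exp_op_sums]
  by (simp add: cinner_scaleR_right)

lemma bounded_linear_exp_op_diff: "bounded_linear (exp_op_diff A e)"
  unfolding exp_op_diff_def by (intro bounded_linear_sub bounded_linear_exp_op bounded_linear_ident)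

lemma exp_op_binomial:
  "exp_op A (real k * e) x = (\<Sum>j\<le>k. real (k choose j) *\<^sub>R (exp_op_diff A e ^^ j) x)"
proof -
  have "exp_op A (real k * e) x = ((\<lambda>y. y + exp_op_diff A e y) ^^ k) x"
  proof (induction k)
    case (Suc k)
    have "exp_op A (real (Suc k) * e) x = exp_op A e (exp_op A (real k * e) x)"
      by (simp add: exp_op_add algebra_simps)
    then show ?case
      by (simp add: Suc exp_op_diff_def)
  qed (simp add: exp_op_zero)
  then show ?thesis
    by (simp add: linear_funpow_binomial[OF bounded_linear.linear[OF bounded_linear_exp_op_diff]])
qed

lemma norm_exp_op_diff_funpow_le:
  assumes "0 \<le> e"
  shows "norm ((exp_op_diff A e ^^ j) y) \<le> (exp (e * onorm A) - 1) ^ j * norm y"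
proof (induction j)
  case (Suc j)
  have "norm ((exp_op_diff A e ^^ Suc j) y) \<le> (exp (e * onorm A) - 1) * norm ((exp_op_diff A e ^^ j) y)"
    using norm_exp_op_minus_le[of e] assms by (simp add: exp_op_diff_def)
  also have "\<dots> \<le> (exp (e * onorm A) - 1) * ((exp (e * onorm A) - 1) ^ j * norm y)"
    using assms onorm_pos_le[OF A] by (intro mult_left_mono Suc) simp
  finally show ?case by (simp add: mult.assoc)
qed simp

lemma borel_measurable_frame_integrand [measurable]:
  "(\<lambda>t. ennreal ((cmod (cinner y (exp_op A t g)))\<^sup>2)) \<in> borel_measurable borel"
proof -
  have "continuous_on UNIV (\<lambda>t. cinner y (exp_op A t g))"
    by (rule bounded_linear.continuous_on[OF bounded_linear_cinner_right continuous_on_exp_op])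
  then have [measurable]: "(\<lambda>t. cinner y (exp_op A t g)) \<in> borel_measurable borel"
    by (rule borel_measurable_continuous_onI)
  show ?thesis by measurable
qed

lemma frame_sum_on_le_sum:
  assumes "finite I" and "\<And>i. i \<in> I \<Longrightarrow> c i < top"
    and "\<And>w. ennreal ((cmod (cinner y w))\<^sup>2) \<le> (\<Sum>i\<in>I. c i * ennreal ((cmod (cinner (v i) w))\<^sup>2))"
  shows "frame_sum_on A G a b y \<le> (\<Sum>i\<in>I. c i * frame_sum_on A G a b (v i))"
proof -
  let ?F = "\<lambda>y g t. indicator {a..<b} t * ennreal ((cmod (cinner y (exp_op A t g)))\<^sup>2)"
  have "(\<integral>\<^sup>+ t. ?F y g t \<partial>lborel) \<le> (\<integral>\<^sup>+ t. (\<Sum>i\<in>I. c i * ?F (v i) g t) \<partial>lborel)" for g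
  proof (rule nn_integral_mono)
    fix t
    have "?F y g t \<le> indicator {a..<b} t * (\<Sum>i\<in>I. c i * ennreal ((cmod (cinner (v i) (exp_op A t g)))\<^sup>2))"
      by (intro mult_left_mono assms(3)) simp
    then show "?F y g t \<le> (\<Sum>i\<in>I. c i * ?F (v i) g t)"
      by (simp add: sum_distrib_left mult.left_commute)
  qed
  also have "(\<integral>\<^sup>+ t. (\<Sum>i\<in>I. c i * ?F (v i) g t) \<partial>lborel) = (\<Sum>i\<in>I. c i * \<integral>\<^sup>+ t. ?F (v i) g t \<partial>lborel)" for g
    by (subst nn_integral_sum) (auto intro!: sum.cong nn_integral_cmult)
  finally have "frame_sum_on A G a b y \<le> (\<Sum>\<^sub>\<infinity> g\<in>G. \<Sum>i\<in>I. c i * \<integral>\<^sup>+ t. ?F (v i) g t \<partial>lborel)"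
    unfolding frame_sum_on_def by (intro infsum_mono) (simp_all add: nonneg_summable_on_complete)
  also have "\<dots> = (\<Sum>i\<in>I. c i * frame_sum_on A G a b (v i))"
    unfolding frame_sum_on_def by (simp add: infsum_sum_ennreal[OF assms(1)] infsum_cmult_ennreal assms(2))
  finally show ?thesis .
qed

lemma frame_sum_on_sum_le:
  assumes "finite I"
  shows "frame_sum_on A G a b (\<Sum>i\<in>I. v i) \<le> of_nat (card I) * (\<Sum>i\<in>I. frame_sum_on A G a b (v i))"
proof -
  have "frame_sum_on A G a b (\<Sum>i\<in>I. v i) \<le> (\<Sum>i\<in>I. of_nat (card I) * frame_sum_on A G a b (v i))"
  proof (rule frame_sum_on_le_sum[OF assms])
    fix w
    have "(cmod (cinner (\<Sum>i\<in>I. v i) w))\<^sup>2 \<le> (\<Sum>i\<in>I. cmod (cinner (v i) w))\<^sup>2"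
      by (simp add: cinner_sum_left power_mono norm_sum)
    also have "\<dots> \<le> real (card I) * (\<Sum>i\<in>I. (cmod (cinner (v i) w))\<^sup>2)"
      using sum_squared_le_sum_of_squares by (simp add: mult.commute)
    finally have "ennreal ((cmod (cinner (\<Sum>i\<in>I. v i) w))\<^sup>2)
        \<le> ennreal (real (card I) * (\<Sum>i\<in>I. (cmod (cinner (v i) w))\<^sup>2))"
      by (rule ennreal_leI)
    also have "\<dots> = (\<Sum>i\<in>I. of_nat (card I) * ennreal ((cmod (cinner (v i) w))\<^sup>2))"
      by (simp add: ennreal_mult sum_distrib_left ennreal_of_nat_eq_real_of_nat sum_ennreal[symmetric])
    finally show "ennreal ((cmod (cinner (\<Sum>i\<in>I. v i) w))\<^sup>2)
        \<le> (\<Sum>i\<in>I. of_nat (card I) * ennreal ((cmod (cinner (v i) w))\<^sup>2))" .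
  qed (simp add: of_nat_less_top)
  then show ?thesis
    by (simp add: sum_distrib_left)
qed

lemma frame_sum_on_scaleR_le: "frame_sum_on A G a b (r *\<^sub>R y) \<le> ennreal (r\<^sup>2) * frame_sum_on A G a b y"
  using frame_sum_on_le_sum[of "{()}" "\<lambda>_. ennreal (r\<^sup>2)" "r *\<^sub>R y" "\<lambda>_. y"]
  by (simp add: cinner_scaleR_left norm_mult power_mult_distrib ennreal_mult)

lemma frame_sum_on_diff_le:
  "frame_sum_on A G a b (y - z) \<le> 2 * frame_sum_on A G a b y + 2 * frame_sum_on A G a b z"
proof -
  let ?v = "\<lambda>i. if i then y else z"
  have "frame_sum_on A G a b (y - z) \<le> (\<Sum>i\<in>UNIV. 2 * frame_sum_on A G a b (?v i))"
  proof (rule frame_sum_on_le_sum)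
    fix w
    let ?p = "cmod (cinner y w)" and ?q = "cmod (cinner z w)"
    have "(cmod (cinner (y - z) w))\<^sup>2 \<le> (?p + ?q)\<^sup>2"
      by (intro power_mono) (auto simp: cinner_diff_left norm_triangle_ineq4)
    also have "\<dots> \<le> 2 * ?p\<^sup>2 + 2 * ?q\<^sup>2"
      using zero_le_power2[of "?p - ?q"] by (simp add: power2_eq_square algebra_simps)
    finally have "ennreal ((cmod (cinner (y - z) w))\<^sup>2) \<le> ennreal (2 * ?p\<^sup>2 + 2 * ?q\<^sup>2)"
      by (rule ennreal_leI)
    then show "ennreal ((cmod (cinner (y - z) w))\<^sup>2) \<le> (\<Sum>i\<in>UNIV. 2 * ennreal ((cmod (cinner (?v i) w))\<^sup>2))"
      by (simp add: UNIV_bool ennreal_plus ennreal_mult add.commute)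
  qed simp_all
  then show ?thesis
    by (simp add: UNIV_bool add.commute)
qed

text \<open>Along the orbit \<open>u\<^sub>i = e\<^sup>i\<^sup>e\<^sup>A x\<close> one has \<open>\<Delta>\<^sup>j\<^sup>+\<^sup>1 u\<^sub>i = \<Delta>\<^sup>j u\<^sub>i\<^sub>+\<^sub>1 - \<Delta>\<^sup>j u\<^sub>i\<close>, and each
  such step at most quadruples a bound on the frame sum.\<close>

lemma frame_sum_on_exp_op_diff_funpow_le:
  assumes "\<And>i. i < N \<Longrightarrow> frame_sum_on A G 0 e (exp_op A (real i * e) x) \<le> B"
  shows "i + j < N \<Longrightarrow> frame_sum_on A G 0 e ((exp_op_diff A e ^^ j) (exp_op A (real i * e) x)) \<le> 4 ^ j * B"
proof (induction j arbitrary: i)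
  case 0
  then show ?case using assms by simp
next
  case (Suc j)
  let ?Q = "frame_sum_on A G 0 e" and ?D = "exp_op_diff A e ^^ j"
  have "exp_op_diff A e (exp_op A (real i * e) x) = exp_op A (real (Suc i) * e) x - exp_op A (real i * e) x"
    by (simp add: exp_op_diff_def exp_op_add algebra_simps)
  then have "(exp_op_diff A e ^^ Suc j) (exp_op A (real i * e) x)
      = ?D (exp_op A (real (Suc i) * e) x) - ?D (exp_op A (real i * e) x)"
    by (simp add: funpow_Suc_right linear_diff[OF bounded_linear.linear[OF bounded_linear_funpow[OF bounded_linear_exp_op_diff]]] del: funpow.simps)
  then have "?Q ((exp_op_diff A e ^^ Suc j) (exp_op A (real i * e) x))
      \<le> 2 * ?Q (?D (exp_op A (real (Suc i) * e) x)) + 2 * ?Q (?D (exp_op A (real i * e) x))"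
    by (simp add: frame_sum_on_diff_le)
  also have "\<dots> \<le> 2 * (4 ^ j * B) + 2 * (4 ^ j * B)"
    using Suc.IH[of "Suc i"] Suc.IH[of i] Suc.prems by (intro add_mono mult_left_mono) simp_all
  also have "\<dots> = (2 + 2) * (4 ^ j * B)"
    by (rule distrib_right[symmetric])
  also have "\<dots> = 4 ^ Suc j * B"
    by (simp add: mult.assoc)
  finally show ?case .
qed

context
  assumes selfadjoint: "selfadjoint_op A"
begin

lemma cinner_exp_op_selfadjoint: "cinner x (exp_op A t y) = cinner (exp_op A t x) y"
proof -
  have "(\<lambda>n. cnj (of_real (t ^ n / fact n) * cinner y ((A ^^ n) x))) sums cnj (cinner y (exp_op A t x))"
    by (rule sums_cnj[THEN iffD2, OF cinner_exp_op_sums])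
  moreover have "cnj (cinner y ((A ^^ n) x)) = cinner x ((A ^^ n) y)" for n
    using cinner_funpow_selfadjoint[OF selfadjoint] by (metis cinner_commute)
  ultimately have "(\<lambda>n. of_real (t ^ n / fact n) * cinner x ((A ^^ n) y)) sums cinner (exp_op A t x) y"
    by (metis (no_types, lifting) cinner_commute complex_cnj_complex_of_real complex_cnj_mult sums_cong)
  then show ?thesis
    by (rule sums_unique2[OF cinner_exp_op_sums])
qed

lemma frame_sum_on_shift: "frame_sum_on A G s (s + e) y = frame_sum_on A G 0 e (exp_op A s y)"
  unfolding frame_sum_on_def
proof (rule infsum_cong)
  fix g
  have "(\<integral>\<^sup>+ t. indicator {s..<s + e} t * ennreal ((cmod (cinner y (exp_op A t g)))\<^sup>2) \<partial>lborel)
      = (\<integral>\<^sup>+ t. indicator {s..<s + e} (s + t) * ennreal ((cmod (cinner y (exp_op A (s + t) g)))\<^sup>2) \<partial>lborel)"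
    using nn_integral_real_affine[of "\<lambda>t. indicator {s..<s + e} t * ennreal ((cmod (cinner y (exp_op A t g)))\<^sup>2)" 1 s]
    by simp
  also have "\<dots> = (\<integral>\<^sup>+ t. indicator {0..<e} t * ennreal ((cmod (cinner (exp_op A s y) (exp_op A t g)))\<^sup>2) \<partial>lborel)"
    by (intro nn_integral_cong)
      (simp add: indicator_def exp_op_add[symmetric] cinner_exp_op_selfadjoint)
  finally show "(\<integral>\<^sup>+ t. indicator {s..<s + e} t * ennreal ((cmod (cinner y (exp_op A t g)))\<^sup>2) \<partial>lborel)
      = (\<integral>\<^sup>+ t. indicator {0..<e} t * ennreal ((cmod (cinner (exp_op A s y) (exp_op A t g)))\<^sup>2) \<partial>lborel)" .
qed

lemma frame_sum_on_le_sum_shifts: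
  assumes "0 < e" and "c \<le> real K * e"
  shows "frame_sum_on A G 0 c x \<le> (\<Sum>k<K. frame_sum_on A G 0 e (exp_op A (real k * e) x))"
proof -
  let ?F = "\<lambda>t g. ennreal ((cmod (cinner x (exp_op A t g)))\<^sup>2)"
  have "(\<integral>\<^sup>+ t. indicator {0..<c} t * ?F t g \<partial>lborel)
      \<le> (\<integral>\<^sup>+ t. (\<Sum>k<K. indicator {real k * e..<real (Suc k) * e} t * ?F t g) \<partial>lborel)" for g
    using indicator_le_sum_indicator[OF assms]
    by (intro nn_integral_mono) (simp add: mult_right_mono flip: sum_distrib_right)
  also have "\<dots> g = (\<Sum>k<K. \<integral>\<^sup>+ t. indicator {real k * e..<real (Suc k) * e} t * ?F t g \<partial>lborel)" for g
    by (intro nn_integral_sum) measurable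
  finally have "frame_sum_on A G 0 c x \<le> (\<Sum>k<K. frame_sum_on A G (real k * e) (real (Suc k) * e) x)"
    unfolding frame_sum_on_def
    by (subst infsum_sum_ennreal[symmetric]) (auto intro: infsum_mono simp: nonneg_summable_on_complete)
  also have "\<dots> = (\<Sum>k<K. frame_sum_on A G 0 e (exp_op A (real k * e) x))"
    by (intro sum.cong) (simp_all add: frame_sum_on_shift[symmetric] algebra_simps)
  finally show ?thesis .
qed

lemma frame_sum_on_upper_bound:
  assumes "\<And>y. frame_sum_on A G 0 1 y \<le> ennreal (c * (norm y)\<^sup>2)" and "0 < c"
  shows "\<exists>c'>0. \<forall>x. frame_sum_on A G 0 \<tau> x \<le> ennreal (c' * (norm x)\<^sup>2)"
proof -
  define K where "K = nat \<lceil>\<tau>\<rceil>"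
  define C where "C = c * (exp (real K * onorm A))\<^sup>2"
  have "0 < C" using assms(2) by (simp add: C_def)
  have main: "frame_sum_on A G 0 \<tau> x \<le> ennreal (real K * C * (norm x)\<^sup>2)" for x
  proof -
    have "frame_sum_on A G 0 \<tau> x \<le> (\<Sum>k<K. frame_sum_on A G 0 1 (exp_op A (real k) x))"
      using frame_sum_on_le_sum_shifts[where e=1 and c=\<tau> and K=K] by (simp add: K_def real_nat_ceiling_ge)
    also have "\<dots> \<le> (\<Sum>k<K. ennreal (C * (norm x)\<^sup>2))"
    proof (rule sum_mono)
      fix k assume "k \<in> {..<K}"
      then have "exp (real k * onorm A) \<le> exp (real K * onorm A)"
        using onorm_pos_le[OF A] by (simp add: mult_right_mono)
      then have "norm (exp_op A (real k) x) \<le> exp (real K * onorm A) * norm x"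
        using norm_exp_op_le[of "real k" x] by (simp add: order_trans mult_right_mono)
      then have "c * (norm (exp_op A (real k) x))\<^sup>2 \<le> C * (norm x)\<^sup>2"
        using assms(2) by (simp add: C_def power_mult_distrib[symmetric] power_mono)
      then show "frame_sum_on A G 0 1 (exp_op A (real k) x) \<le> ennreal (C * (norm x)\<^sup>2)"
        using assms(1) ennreal_leI order.trans by blast
    qed
    also have "\<dots> = ennreal (real K * C * (norm x)\<^sup>2)"
      using \<open>0 < C\<close> by (simp add: ennreal_of_nat_eq_real_of_nat ennreal_mult[symmetric] mult.assoc)
    finally show ?thesis .
  qed
  show ?thesis
  proof (intro exI[of _ "(real K + 1) * C"] conjI allI)
    show "0 < (real K + 1) * C" using \<open>0 < C\<close> by simp
    show "frame_sum_on A G 0 \<tau> x \<le> ennreal ((real K + 1) * C * (norm x)\<^sup>2)" for x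
      using \<open>0 < C\<close> by (intro order.trans[OF main] ennreal_leI mult_right_mono) auto
  qed
qed

lemma frame_sum_on_orbit_le:
  assumes "0 \<le> e" and "i < N"
  shows "frame_sum_on A G 0 e (exp_op A (real i * e) x) \<le> frame_sum_on A G 0 (real N * e) x"
proof -
  have "real i * e + e = real (Suc i) * e"
    by (simp add: algebra_simps)
  also have "\<dots> \<le> real N * e"
    using assms by (intro mult_right_mono) auto
  finally have "real i * e + e \<le> real N * e" .
  then show ?thesis
    using assms by (simp add: frame_sum_on_shift[symmetric] frame_sum_on_mono)
qed

lemma frame_sum_on_binomial_head_le:
  assumes "0 \<le> e"
  shows "frame_sum_on A G 0 e (\<Sum>j\<in>{..k} \<inter> {..<N}. real (k choose j) *\<^sub>R (exp_op_diff A e ^^ j) x)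
    \<le> ennreal ((real N)\<^sup>2 * 4 ^ k * 4 ^ N) * frame_sum_on A G 0 (real N * e) x"
proof -
  let ?J = "{..k} \<inter> {..<N}" and ?B = "frame_sum_on A G 0 (real N * e) x"
  have card_J: "card ?J \<le> N"
    by (metis card_lessThan card_mono finite_lessThan inf_le2)
  have "frame_sum_on A G 0 e (real (k choose j) *\<^sub>R (exp_op_diff A e ^^ j) x) \<le> ennreal (4 ^ k * 4 ^ N) * ?B"
    if "j \<in> ?J" for j
  proof -
    have "frame_sum_on A G 0 e ((exp_op_diff A e ^^ j) x) \<le> 4 ^ j * ?B"
      using frame_sum_on_exp_op_diff_funpow_le[OF frame_sum_on_orbit_le[OF assms], where i=0 and j=j] that
      by (simp add: exp_op_zero)
    then have "frame_sum_on A G 0 e (real (k choose j) *\<^sub>R (exp_op_diff A e ^^ j) x)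
        \<le> ennreal ((real (k choose j))\<^sup>2) * (4 ^ j * ?B)"
      by (intro order.trans[OF frame_sum_on_scaleR_le] mult_left_mono) simp_all
    also have "\<dots> = ennreal ((real (k choose j))\<^sup>2 * 4 ^ j) * ?B"
      using ennreal_power[of 4 j] by (simp add: ennreal_mult mult.assoc)
    also have "\<dots> \<le> ennreal (4 ^ k * 4 ^ N) * ?B"
      using that by (intro mult_right_mono ennreal_leI mult_mono binomial_squared_le power_increasing) auto
    finally show ?thesis .
  qed
  then have "frame_sum_on A G 0 e (\<Sum>j\<in>?J. real (k choose j) *\<^sub>R (exp_op_diff A e ^^ j) x)
      \<le> of_nat (card ?J) * (\<Sum>j\<in>?J. ennreal (4 ^ k * 4 ^ N) * ?B)"
    by (intro order.trans[OF frame_sum_on_sum_le] mult_left_mono sum_mono) auto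
  also have "\<dots> \<le> of_nat N * (of_nat N * (ennreal (4 ^ k * 4 ^ N) * ?B))"
    using card_J by (intro mult_mono) (auto simp: mult_right_mono)
  also have "\<dots> = ennreal ((real N)\<^sup>2 * 4 ^ k * 4 ^ N) * ?B"
    by (simp add: ennreal_of_nat_eq_real_of_nat ennreal_mult power2_eq_square mult.assoc)
  finally show ?thesis .
qed

lemma norm_binomial_tail_le:
  assumes "0 \<le> e" and "exp (e * onorm A) - 1 \<le> 1"
  shows "norm (\<Sum>j\<in>{..k} - {..<N}. real (k choose j) *\<^sub>R (exp_op_diff A e ^^ j) x)
    \<le> 2 ^ k * (exp (e * onorm A) - 1) ^ N * norm x"
proof -
  let ?\<delta> = "exp (e * onorm A) - 1"
  have "0 \<le> ?\<delta>" using assms(1) onorm_pos_le[OF A] by simp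
  have "norm (\<Sum>j\<in>{..k} - {..<N}. real (k choose j) *\<^sub>R (exp_op_diff A e ^^ j) x)
      \<le> (\<Sum>j\<in>{..k} - {..<N}. real (k choose j) * (?\<delta> ^ N * norm x))"
  proof (rule order.trans[OF norm_sum sum_mono])
    fix j assume "j \<in> {..k} - {..<N}"
    then have "?\<delta> ^ j \<le> ?\<delta> ^ N"
      using \<open>0 \<le> ?\<delta>\<close> assms(2) by (intro power_decreasing) auto
    then show "norm (real (k choose j) *\<^sub>R (exp_op_diff A e ^^ j) x) \<le> real (k choose j) * (?\<delta> ^ N * norm x)"
      using norm_exp_op_diff_funpow_le[OF assms(1), of j x]
      by (simp add: mult_left_mono order_trans mult_right_mono)
  qed
  also have "\<dots> \<le> (\<Sum>j\<le>k. real (k choose j)) * (?\<delta> ^ N * norm x)"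
    using \<open>0 \<le> ?\<delta>\<close> by (simp add: sum_distrib_right[symmetric] sum_mono2 mult_right_mono)
  also have "(\<Sum>j\<le>k. real (k choose j)) = 2 ^ k"
    by (simp flip: of_nat_sum add: choose_row_sum)
  finally show ?thesis by (simp add: mult.assoc)
qed

lemma frame_sum_on_exp_op_block_le:
  assumes "0 \<le> e" and "e \<le> 1" and "exp (e * onorm A) - 1 \<le> 1"
    and upper: "\<And>y. frame_sum_on A G 0 1 y \<le> ennreal (c * (norm y)\<^sup>2)" and "0 \<le> c"
  shows "frame_sum_on A G 0 e (exp_op A (real k * e) x)
    \<le> ennreal (2 * (real N)\<^sup>2 * 4 ^ k * 4 ^ N) * frame_sum_on A G 0 (real N * e) x
      + ennreal (2 * c * 4 ^ k * (exp (e * onorm A) - 1) ^ (2 * N) * (norm x)\<^sup>2)"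
proof -
  let ?Q = "frame_sum_on A G 0 e" and ?\<delta> = "exp (e * onorm A) - 1"
  let ?f = "\<lambda>j. real (k choose j) *\<^sub>R (exp_op_diff A e ^^ j) x"
  define P where "P = (\<Sum>j\<in>{..k} \<inter> {..<N}. ?f j)"
  define R where "R = (\<Sum>j\<in>{..k} - {..<N}. ?f j)"
  have "exp_op A (real k * e) x = P - (- R)"
    using sum.Int_Diff[of "{..k}" ?f "{..<N}"] by (simp add: exp_op_binomial P_def R_def)
  then have "?Q (exp_op A (real k * e) x) \<le> 2 * ?Q P + 2 * ?Q (- R)"
    by (simp only: frame_sum_on_diff_le)
  moreover have "?Q (- R) \<le> ennreal (c * 4 ^ k * ?\<delta> ^ (2 * N) * (norm x)\<^sup>2)"
  proof -
    have "(norm R)\<^sup>2 \<le> (2 ^ k * ?\<delta> ^ N * norm x)\<^sup>2"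
      using norm_binomial_tail_le[OF assms(1,3)] by (simp add: R_def power_mono)
    also have "\<dots> = 4 ^ k * ?\<delta> ^ (2 * N) * (norm x)\<^sup>2"
      by (simp add: power_mult_distrib four_pow power_mult[symmetric] mult.commute)
    finally have norm_R: "(norm R)\<^sup>2 \<le> 4 ^ k * ?\<delta> ^ (2 * N) * (norm x)\<^sup>2" .
    have "?Q (- R) \<le> ?Q R"
      using frame_sum_on_scaleR_le[of G 0 e "-1" R] by simp
    also have "\<dots> \<le> ennreal (c * (norm R)\<^sup>2)"
      using assms(2) by (intro order.trans[OF frame_sum_on_mono upper]) auto
    also have "\<dots> \<le> ennreal (c * 4 ^ k * ?\<delta> ^ (2 * N) * (norm x)\<^sup>2)"
      using norm_R \<open>0 \<le> c\<close> by (simp add: ennreal_leI mult_left_mono mult.assoc)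
    finally show ?thesis .
  qed
  moreover have "?Q P \<le> ennreal ((real N)\<^sup>2 * 4 ^ k * 4 ^ N) * frame_sum_on A G 0 (real N * e) x"
    unfolding P_def by (rule frame_sum_on_binomial_head_le[OF assms(1)])
  ultimately have "?Q (exp_op A (real k * e) x)
      \<le> 2 * (ennreal ((real N)\<^sup>2 * 4 ^ k * 4 ^ N) * frame_sum_on A G 0 (real N * e) x)
        + 2 * ennreal (c * 4 ^ k * ?\<delta> ^ (2 * N) * (norm x)\<^sup>2)"
    by (meson add_mono mult_left_mono order.trans zero_le)
  also have "\<dots> = ennreal (2 * (real N)\<^sup>2 * 4 ^ k * 4 ^ N) * frame_sum_on A G 0 (real N * e) x
      + ennreal (2 * c * 4 ^ k * ?\<delta> ^ (2 * N) * (norm x)\<^sup>2)"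
    using \<open>0 \<le> c\<close> assms(1) onorm_pos_le[OF A] by (simp add: ennreal_mult mult.assoc)
  finally show ?thesis .
qed

lemma frame_sum_on_blocks_le:
  assumes "0 < e" and "e \<le> 1" and "1 \<le> real K * e" and "exp (e * onorm A) - 1 \<le> 1"
    and lower: "ennreal (c1 * (norm x)\<^sup>2) \<le> frame_sum_on A G 0 1 x"
    and upper: "\<And>y. frame_sum_on A G 0 1 y \<le> ennreal (c2 * (norm y)\<^sup>2)" and "0 \<le> c2"
  shows "ennreal (c1 * (norm x)\<^sup>2)
    \<le> ennreal (real K * (2 * (real N)\<^sup>2 * 4 ^ K * 4 ^ N)) * frame_sum_on A G 0 (real N * e) x
      + ennreal (real K * (2 * c2 * 4 ^ K * (exp (e * onorm A) - 1) ^ (2 * N) * (norm x)\<^sup>2))"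
proof -
  let ?\<delta> = "exp (e * onorm A) - 1" and ?B = "frame_sum_on A G 0 (real N * e) x"
  let ?C1 = "2 * (real N)\<^sup>2 * 4 ^ K * 4 ^ N" and ?C2 = "2 * c2 * 4 ^ K * ?\<delta> ^ (2 * N) * (norm x)\<^sup>2"
  have "0 \<le> ?\<delta>"
    using assms(1) onorm_pos_le[OF A] by simp
  have "frame_sum_on A G 0 1 x \<le> (\<Sum>k<K. frame_sum_on A G 0 e (exp_op A (real k * e) x))"
    by (rule frame_sum_on_le_sum_shifts[OF assms(1,3)])
  also have "\<dots> \<le> (\<Sum>k<K. ennreal ?C1 * ?B + ennreal ?C2)"
  proof (rule sum_mono)
    fix k assume "k \<in> {..<K}"
    then have "(4::real) ^ k \<le> 4 ^ K"
      by (intro power_increasing) auto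
    then have "ennreal (2 * (real N)\<^sup>2 * 4 ^ k * 4 ^ N) * ?B + ennreal (2 * c2 * 4 ^ k * ?\<delta> ^ (2 * N) * (norm x)\<^sup>2)
        \<le> ennreal ?C1 * ?B + ennreal ?C2"
      using \<open>0 \<le> c2\<close> \<open>0 \<le> ?\<delta>\<close>
      by (intro add_mono mult_right_mono ennreal_leI) (simp_all add: mult_right_mono mult_left_mono)
    with frame_sum_on_exp_op_block_le[OF less_imp_le[OF assms(1)] assms(2,4) upper \<open>0 \<le> c2\<close>]
    show "frame_sum_on A G 0 e (exp_op A (real k * e) x) \<le> ennreal ?C1 * ?B + ennreal ?C2"
      by (rule order.trans)
  qed
  also have "\<dots> = ennreal (real K * ?C1) * ?B + ennreal (real K * ?C2)"
    using \<open>0 \<le> c2\<close> \<open>0 \<le> ?\<delta>\<close>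
    by (simp add: ennreal_of_nat_eq_real_of_nat ennreal_mult distrib_left mult.assoc)
  finally show ?thesis
    using lower by (rule order.trans[rotated])
qed

lemma frame_sum_on_lower_bound_of_small_step:
  assumes lower: "\<And>y. ennreal (c1 * (norm y)\<^sup>2) \<le> frame_sum_on A G 0 1 y" and "0 < c1"
    and upper: "\<And>y. frame_sum_on A G 0 1 y \<le> ennreal (c2 * (norm y)\<^sup>2)" and "0 < c2"
    and "0 < e" and "e \<le> 1" and "1 \<le> real K * e" and "1 \<le> N"
    and "exp (e * onorm A) - 1 \<le> 1"
    and small: "real K * 4 ^ K * (exp (e * onorm A) - 1) ^ (2 * N) \<le> c1 / (4 * c2)"
  shows "\<exists>c>0. \<forall>x. ennreal (c * (norm x)\<^sup>2) \<le> frame_sum_on A G 0 (real N * e) x"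
proof -
  define M where "M = real K * (2 * (real N)\<^sup>2 * 4 ^ K * 4 ^ N)"
  have "1 \<le> K"
    using \<open>e \<le> 1\<close> \<open>1 \<le> real K * e\<close> \<open>0 < e\<close>
    by (metis less_one linorder_not_le mult_eq_0_iff mult_le_one of_nat_0 of_nat_le_iff of_nat_1 order.trans)
  then have "0 < M"
    using \<open>1 \<le> N\<close> by (simp add: M_def)
  have "0 \<le> exp (e * onorm A) - 1"
    using \<open>0 < e\<close> onorm_pos_le[OF A] by simp
  show ?thesis
  proof (intro exI[of _ "c1 / (2 * M)"] conjI allI)
    show "0 < c1 / (2 * M)"
      using \<open>0 < c1\<close> \<open>0 < M\<close> by simp
    fix x :: 'a
    let ?r = "real K * (2 * c2 * 4 ^ K * (exp (e * onorm A) - 1) ^ (2 * N) * (norm x)\<^sup>2)"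
    have "?r = 2 * c2 * (norm x)\<^sup>2 * (real K * 4 ^ K * (exp (e * onorm A) - 1) ^ (2 * N))"
      by (simp add: algebra_simps)
    also have "\<dots> \<le> 2 * c2 * (norm x)\<^sup>2 * (c1 / (4 * c2))"
      using small \<open>0 < c2\<close> by (intro mult_left_mono) simp_all
    finally have "?r \<le> c1 * (norm x)\<^sup>2 / 2"
      using \<open>0 < c2\<close> by (simp add: field_simps)
    moreover have "ennreal (c1 * (norm x)\<^sup>2) \<le> ennreal M * frame_sum_on A G 0 (real N * e) x + ennreal ?r"
      unfolding M_def using \<open>0 < c2\<close>
      by (intro frame_sum_on_blocks_le lower upper) (use assms(5-9) in simp_all)
    ultimately have "ennreal (c1 * (norm x)\<^sup>2 / (2 * M)) \<le> frame_sum_on A G 0 (real N * e) x"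
      using \<open>0 < M\<close> \<open>0 < c2\<close> \<open>0 \<le> exp (e * onorm A) - 1\<close>
      by (intro ennreal_le_of_le_mult_add) auto
    then show "ennreal (c1 / (2 * M) * (norm x)\<^sup>2) \<le> frame_sum_on A G 0 (real N * e) x"
      by simp
  qed
qed

lemma frame_sum_on_lower_bound:
  assumes lower: "\<And>y. ennreal (c1 * (norm y)\<^sup>2) \<le> frame_sum_on A G 0 1 y" and "0 < c1"
    and upper: "\<And>y. frame_sum_on A G 0 1 y \<le> ennreal (c2 * (norm y)\<^sup>2)" and "0 < c2"
    and "0 < \<tau>"
  shows "\<exists>c>0. \<forall>x. ennreal (c * (norm x)\<^sup>2) \<le> frame_sum_on A G 0 \<tau> x"
proof (cases "1 \<le> \<tau>")
  case True
  then show ?thesis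
    using \<open>0 < c1\<close> order.trans[OF lower frame_sum_on_mono] by fastforce
next
  case False
  define m where "m = nat \<lceil>1 / \<tau>\<rceil>"
  have "1 / \<tau> \<le> real m"
    unfolding m_def by linarith
  then have "1 \<le> real m * \<tau>" and "1 \<le> m"
    using \<open>0 < \<tau>\<close> by (simp_all add: field_simps) (cases m; simp)
  obtain N where "1 \<le> N" and "exp (\<tau> * onorm A / real N) - 1 \<le> 1"
    and "real (m * N) * 4 ^ (m * N) * (exp (\<tau> * onorm A / real N) - 1) ^ (2 * N) \<le> c1 / (4 * c2)"
    using exists_exp_step_small[of "\<tau> * onorm A" "c1 / (4 * c2)" m] \<open>0 < \<tau>\<close> \<open>0 < c1\<close> \<open>0 < c2\<close>
      \<open>1 \<le> m\<close> onorm_pos_le[OF A] by auto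
  moreover have "\<tau> / real N \<le> 1"
    using False \<open>1 \<le> N\<close> \<open>0 < \<tau>\<close> by (simp add: divide_le_eq)
  ultimately show ?thesis
    using frame_sum_on_lower_bound_of_small_step[OF lower \<open>0 < c1\<close> upper \<open>0 < c2\<close>,
        of "\<tau> / real N" "m * N" N] \<open>0 < \<tau>\<close> \<open>1 \<le> real m * \<tau>\<close>
    by simp
qed

end

end

theorem theorem3p11:
  fixes A :: "'a::{complex_inner, complete_space} \<Rightarrow> 'a" and G :: "'a set"
  assumes "separable_type TYPE('a)"
    and "bounded_clinear_op A"
    and "selfadjoint_op A"
    and "countable G"
  shows "semicont_frame A G 1 \<longleftrightarrow> (\<forall>\<tau>>0. semicont_frame A G \<tau>)"
proof
  assume "semicont_frame A G 1"
  then obtain c1 c2 where "0 < c1" "0 < c2"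
    and lower: "\<And>y. ennreal (c1 * (norm y)\<^sup>2) \<le> frame_sum_on A G 0 1 y"
    and upper: "\<And>y. frame_sum_on A G 0 1 y \<le> ennreal (c2 * (norm y)\<^sup>2)"
    unfolding semicont_frame_def semicont_frame_sum_eq by blast
  have A: "bounded_linear A"
    using assms(2) by (simp add: bounded_clinear_op_def)
  show "\<forall>\<tau>>0. semicont_frame A G \<tau>"
  proof (intro allI impI)
    fix \<tau> :: real
    assume "0 < \<tau>"
    obtain c where "0 < c" "\<And>x. ennreal (c * (norm x)\<^sup>2) \<le> frame_sum_on A G 0 \<tau> x"
      using frame_sum_on_lower_bound[OF A assms(3) lower \<open>0 < c1\<close> upper \<open>0 < c2\<close> \<open>0 < \<tau>\<close>] by blast
    moreover obtain c' where "0 < c'" "\<And>x. frame_sum_on A G 0 \<tau> x \<le> ennreal (c' * (norm x)\<^sup>2)"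
      using frame_sum_on_upper_bound[OF A assms(3) upper \<open>0 < c2\<close>] by blast
    ultimately show "semicont_frame A G \<tau>"
      unfolding semicont_frame_def semicont_frame_sum_eq by blast
  qed
qed simp

end
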